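(* Let $X$ be a $T_1$ space and $\mathcal{P}$ an ideal of closed subsets of $X$ containing every singleton subset of $X$. Then $C(X)_\mathcal{P}$ is a Noetherian ring if and only if $X$ is finite.
   Context: An ideal of closed subsets of $X$ is a family $\mathcal{P}$ of closed subsets closed under finite unions and under passing to closed subsets. $D_f$ is the set of discontinuity points of $f\in\mathbb{R}^X$; $C(X)_\mathcal{P}=\{f\in\mathbb{R}^X\colon\overline{D_f}\in\mathcal{P}\}$ with pointwise operations. *)

theory Defs
  imports "HOL-Analysis.Analysis" "HOL-Algebra.Ring_Divisibility"
begin

definition closed_ideal :: "'a topology \<Rightarrow> 'a set set \<Rightarrow> bool" where
  "closed_ideal X P \<longleftrightarrow>
     (\<forall>A\<in>P. closedin X A) \<and> {} \<in> P \<and>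
     (\<forall>A\<in>P. \<forall>B\<in>P. A \<union> B \<in> P) \<and>
     (\<forall>A\<in>P. \<forall>B. closedin X B \<and> B \<subseteq> A \<longrightarrow> B \<in> P)"

definition cont_at :: "'a topology \<Rightarrow> ('a \<Rightarrow> real) \<Rightarrow> 'a \<Rightarrow> bool" where
  "cont_at X f x \<longleftrightarrow>
     (\<forall>V. open V \<and> f x \<in> V \<longrightarrow> (\<exists>U. openin X U \<and> x \<in> U \<and> f ` U \<subseteq> V))"

definition disc :: "'a topology \<Rightarrow> ('a \<Rightarrow> real) \<Rightarrow> 'a set" where
  "disc X f = {x \<in> topspace X. \<not> cont_at X f x}"

text \<open>The ring C(X)_P: functions X \<rightarrow> R (represented as extensional functions on
  topspace X) whose discontinuity set has closure in P, with pointwise operations.\<close>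
definition CP :: "'a topology \<Rightarrow> 'a set set \<Rightarrow> ('a \<Rightarrow> real) ring" where
  "CP X P = \<lparr>carrier = {f \<in> extensional (topspace X). X closure_of (disc X f) \<in> P},
            monoid.mult = (\<lambda>f g. restrict (\<lambda>x. f x * g x) (topspace X)),
            one = restrict (\<lambda>x. 1) (topspace X),
            zero = restrict (\<lambda>x. 0) (topspace X),
            add = (\<lambda>f g. restrict (\<lambda>x. f x + g x) (topspace X))\<rparr>"

end

theory Submission
  imports Defs
begin

text \<open>If X is finite, an ideal I of C(X)_P is generated by the indicator functions of the
  finitely many points at which some member of I does not vanish. If X is infinite, the
  finitely supported functions form an ideal (finite sets are closed and lie in P, so these
  functions belong to C(X)_P), and it is not finitely generated: finitely many generators
  vanish outside some finite set S, hence so does every element of the ideal they generate,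
  which therefore misses the indicator function of any point outside S.\<close>

lemma cont_at_iff_tendsto:
  assumes "x \<in> topspace X"
  shows "cont_at X f x \<longleftrightarrow> (f \<longlongrightarrow> f x) (atin X x)"
  using assms by (simp add: cont_at_def limitin_atin_self flip: limitin_canonical_iff)

lemma disc_restrict [simp]: "disc X (restrict f (topspace X)) = disc X f"
proof -
  have "cont_at X (restrict f (topspace X)) x \<longleftrightarrow> cont_at X f x" if "x \<in> topspace X" for x
  proof -
    have "eventually (\<lambda>y. restrict f (topspace X) y = f y) (atin X x)"
      by (auto simp: eventually_atin)
    then show ?thesis
      using that by (simp add: cont_at_iff_tendsto tendsto_cong)
  qed
  then show ?thesis
    by (auto simp: disc_def)
qed

lemma disc_add: "disc X (\<lambda>x. f x + g x) \<subseteq> disc X f \<union> disc X g"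
  by (auto simp: disc_def cont_at_iff_tendsto intro: tendsto_add)

lemma disc_mult: "disc X (\<lambda>x. f x * g x) \<subseteq> disc X f \<union> disc X g"
  by (auto simp: disc_def cont_at_iff_tendsto intro: tendsto_mult)

lemma disc_uminus: "disc X (\<lambda>x. - f x) = disc X f"
  by (auto simp: disc_def cont_at_iff_tendsto tendsto_minus_cancel_left)

lemma disc_const [simp]: "disc X (\<lambda>x. c) = {}"
  by (simp add: disc_def cont_at_iff_tendsto)

lemma disc_subset_of_vanishing:
  assumes "closedin X F" and "\<And>x. x \<in> topspace X - F \<Longrightarrow> f x = 0"
  shows "disc X f \<subseteq> F"
proof
  fix x assume "x \<in> disc X f"
  then have x: "x \<in> topspace X" "\<not> cont_at X f x"
    by (auto simp: disc_def)
  show "x \<in> F"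
  proof (rule ccontr)
    assume "x \<notin> F"
    with x assms have "eventually (\<lambda>y. f y = f x) (atin X x)"
      unfolding eventually_atin by (metis Diff_iff openin_diff openin_topspace)
    then have "cont_at X f x"
      using x by (simp add: cont_at_iff_tendsto tendsto_eventually)
    with x show False by simp
  qed
qed

lemma closed_ideal_empty: "closed_ideal X P \<Longrightarrow> {} \<in> P"
  unfolding closed_ideal_def by blast

lemma closed_ideal_Un: "closed_ideal X P \<Longrightarrow> A \<in> P \<Longrightarrow> B \<in> P \<Longrightarrow> A \<union> B \<in> P"
  unfolding closed_ideal_def by blast

lemma closed_ideal_closure_of_subset:
  assumes "closed_ideal X P" "A \<in> P" "B \<subseteq> A"
  shows "X closure_of B \<in> P"
proof -
  have "closedin X A"
    using assms(1,2) unfolding closed_ideal_def by blast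
  then have "X closure_of B \<subseteq> A"
    by (rule closure_of_minimal[OF assms(3)])
  with assms(1,2) show ?thesis
    unfolding closed_ideal_def by (meson closedin_closure_of)
qed

lemma mem_carrier_CP:
  "f \<in> carrier (CP X P) \<longleftrightarrow> f \<in> extensional (topspace X) \<and> X closure_of (disc X f) \<in> P"
  by (simp add: CP_def)

lemma CP_simps:
  "f \<otimes>\<^bsub>CP X P\<^esub> g = restrict (\<lambda>x. f x * g x) (topspace X)"
  "f \<oplus>\<^bsub>CP X P\<^esub> g = restrict (\<lambda>x. f x + g x) (topspace X)"
  "\<one>\<^bsub>CP X P\<^esub> = restrict (\<lambda>x. 1) (topspace X)"
  "\<zero>\<^bsub>CP X P\<^esub> = restrict (\<lambda>x. 0) (topspace X)"
  by (simp_all add: CP_def)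

lemma restrict_mem_carrier_CP:
  assumes "closed_ideal X P" "f \<in> carrier (CP X P)" "g \<in> carrier (CP X P)"
    and "disc X h \<subseteq> disc X f \<union> disc X g"
  shows "restrict h (topspace X) \<in> carrier (CP X P)"
proof -
  have "disc X f \<union> disc X g \<subseteq> X closure_of (disc X f) \<union> X closure_of (disc X g)"
    by (intro Un_mono closure_of_subset) (auto simp: disc_def)
  with assms(4) have "disc X h \<subseteq> X closure_of (disc X f) \<union> X closure_of (disc X g)"
    by (rule order_trans)
  moreover have "X closure_of (disc X f) \<union> X closure_of (disc X g) \<in> P"
    using assms(1-3) by (simp add: closed_ideal_Un mem_carrier_CP)
  ultimately show ?thesis
    using assms(1) closed_ideal_closure_of_subset by (simp add: mem_carrier_CP)
qed

lemma cring_CP: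
  assumes "closed_ideal X P"
  shows "cring (CP X P)"
proof (rule cringI)
  show "abelian_group (CP X P)"
  proof (rule abelian_groupI)
    show "f \<oplus>\<^bsub>CP X P\<^esub> g \<in> carrier (CP X P)"
      if "f \<in> carrier (CP X P)" "g \<in> carrier (CP X P)" for f g
      unfolding CP_simps by (rule restrict_mem_carrier_CP[OF assms that disc_add])
    show "\<zero>\<^bsub>CP X P\<^esub> \<in> carrier (CP X P)"
      using closed_ideal_empty[OF assms] by (simp add: mem_carrier_CP CP_simps)
    show "f \<oplus>\<^bsub>CP X P\<^esub> g \<oplus>\<^bsub>CP X P\<^esub> h = f \<oplus>\<^bsub>CP X P\<^esub> (g \<oplus>\<^bsub>CP X P\<^esub> h)" for f g h
      by (simp add: CP_simps fun_eq_iff)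
    show "f \<oplus>\<^bsub>CP X P\<^esub> g = g \<oplus>\<^bsub>CP X P\<^esub> f" for f g
      by (simp add: CP_simps fun_eq_iff)
    show "\<zero>\<^bsub>CP X P\<^esub> \<oplus>\<^bsub>CP X P\<^esub> f = f" if "f \<in> carrier (CP X P)" for f
      using that by (auto simp: CP_simps fun_eq_iff mem_carrier_CP extensional_def)
    show "\<exists>g\<in>carrier (CP X P). g \<oplus>\<^bsub>CP X P\<^esub> f = \<zero>\<^bsub>CP X P\<^esub>"
      if "f \<in> carrier (CP X P)" for f
    proof
      show "restrict (\<lambda>x. - f x) (topspace X) \<in> carrier (CP X P)"
        using that by (simp add: mem_carrier_CP disc_uminus)
      show "restrict (\<lambda>x. - f x) (topspace X) \<oplus>\<^bsub>CP X P\<^esub> f = \<zero>\<^bsub>CP X P\<^esub>"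
        by (simp add: CP_simps fun_eq_iff)
    qed
  qed
  show "comm_monoid (CP X P)"
  proof (rule comm_monoidI)
    show "f \<otimes>\<^bsub>CP X P\<^esub> g \<in> carrier (CP X P)"
      if "f \<in> carrier (CP X P)" "g \<in> carrier (CP X P)" for f g
      unfolding CP_simps by (rule restrict_mem_carrier_CP[OF assms that disc_mult])
    show "\<one>\<^bsub>CP X P\<^esub> \<in> carrier (CP X P)"
      using closed_ideal_empty[OF assms] by (simp add: mem_carrier_CP CP_simps)
    show "f \<otimes>\<^bsub>CP X P\<^esub> g \<otimes>\<^bsub>CP X P\<^esub> h = f \<otimes>\<^bsub>CP X P\<^esub> (g \<otimes>\<^bsub>CP X P\<^esub> h)" for f g h
      by (simp add: CP_simps fun_eq_iff)
    show "f \<otimes>\<^bsub>CP X P\<^esub> g = g \<otimes>\<^bsub>CP X P\<^esub> f" for f g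
      by (simp add: CP_simps fun_eq_iff)
    show "\<one>\<^bsub>CP X P\<^esub> \<otimes>\<^bsub>CP X P\<^esub> f = f" if "f \<in> carrier (CP X P)" for f
      using that by (auto simp: CP_simps fun_eq_iff mem_carrier_CP extensional_def)
  qed
qed (simp add: CP_simps fun_eq_iff distrib_right)

lemma ideal_CP_support:
  assumes "closed_ideal X P"
    and "Q {}" and Q_Un: "\<And>A B. Q A \<Longrightarrow> Q B \<Longrightarrow> Q (A \<union> B)"
    and Q_subset: "\<And>A B. Q A \<Longrightarrow> B \<subseteq> A \<Longrightarrow> Q B"
  shows "ideal {f \<in> carrier (CP X P). Q (support_on (topspace X) f)} (CP X P)"
    (is "ideal ?I ?R")
proof -
  interpret cring ?R
    using assms(1) by (rule cring_CP)
  have mult_closed: "g \<otimes>\<^bsub>?R\<^esub> f \<in> ?I" if f: "f \<in> ?I" and g: "g \<in> carrier ?R" for f g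
  proof -
    have "support_on (topspace X) (g \<otimes>\<^bsub>?R\<^esub> f) \<subseteq> support_on (topspace X) f"
      by (auto simp: support_on_def CP_simps)
    with f have "Q (support_on (topspace X) (g \<otimes>\<^bsub>?R\<^esub> f))"
      using Q_subset by blast
    with f g show ?thesis by simp
  qed
  show ?thesis
  proof (rule idealI[OF ring_axioms])
    show "subgroup ?I (add_monoid ?R)"
    proof (rule add.subgroupI)
      show "?I \<subseteq> carrier ?R" by blast
      have "support_on (topspace X) \<zero>\<^bsub>?R\<^esub> = {}"
        by (simp add: support_on_def CP_simps)
      with \<open>Q {}\<close> have "\<zero>\<^bsub>?R\<^esub> \<in> ?I" by simp
      then show "?I \<noteq> {}" by blast
    next
      fix f assume "f \<in> ?I"
      then have "\<ominus>\<^bsub>?R\<^esub> \<one>\<^bsub>?R\<^esub> \<otimes>\<^bsub>?R\<^esub> f \<in> ?I"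
        by (intro mult_closed) simp_all
      with \<open>f \<in> ?I\<close> show "\<ominus>\<^bsub>?R\<^esub> f \<in> ?I"
        by (simp add: l_minus)
    next
      fix f g assume f: "f \<in> ?I" and g: "g \<in> ?I"
      then have "Q (support_on (topspace X) f \<union> support_on (topspace X) g)"
        by (intro Q_Un) simp_all
      moreover have "support_on (topspace X) (f \<oplus>\<^bsub>?R\<^esub> g)
          \<subseteq> support_on (topspace X) f \<union> support_on (topspace X) g"
        by (auto simp: support_on_def CP_simps)
      ultimately have "Q (support_on (topspace X) (f \<oplus>\<^bsub>?R\<^esub> g))"
        by (rule Q_subset)
      with f g show "f \<oplus>\<^bsub>?R\<^esub> g \<in> ?I" by simp
    qed
  next
    show "g \<otimes>\<^bsub>?R\<^esub> f \<in> ?I" if "f \<in> ?I" "g \<in> carrier ?R" for f g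
      using that by (rule mult_closed)
    show "f \<otimes>\<^bsub>?R\<^esub> g \<in> ?I" if "f \<in> ?I" "g \<in> carrier ?R" for f g
      using mult_closed[OF that] that by (simp add: m_comm)
  qed
qed

definition point_indicator :: "'a topology \<Rightarrow> 'a \<Rightarrow> 'a \<Rightarrow> real" where
  "point_indicator X a = restrict (\<lambda>y. if y = a then 1 else 0) (topspace X)"

lemma support_point_indicator:
  "a \<in> topspace X \<Longrightarrow> support_on (topspace X) (point_indicator X a) = {a}"
  by (auto simp: support_on_def point_indicator_def)

locale closed_ideal_with_points =
  fixes X :: "'a topology" and P :: "'a set set"
  assumes closed_ideal: "closed_ideal X P"
    and singleton_mem: "\<And>x. x \<in> topspace X \<Longrightarrow> {x} \<in> P"
begin

sublocale cring "CP X P"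
  using closed_ideal by (rule cring_CP)

lemma finite_mem: "finite F \<Longrightarrow> F \<subseteq> topspace X \<Longrightarrow> F \<in> P"
proof (induction F rule: finite_induct)
  case empty
  show ?case
    using closed_ideal by (rule closed_ideal_empty)
next
  case (insert a F)
  then show ?case
    using closed_ideal_Un[OF closed_ideal singleton_mem] by (metis insert_is_Un insert_subset)
qed

lemma finite_support_mem_carrier:
  assumes "f \<in> extensional (topspace X)" "finite (support_on (topspace X) f)"
  shows "f \<in> carrier (CP X P)"
proof -
  let ?F = "support_on (topspace X) f"
  have "?F \<in> P"
    using assms(2) by (simp add: finite_mem support_on_def)
  then have "closedin X ?F"
    using closed_ideal unfolding closed_ideal_def by blast
  then have "disc X f \<subseteq> ?F"
    by (rule disc_subset_of_vanishing) (simp add: support_on_def)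
  with \<open>?F \<in> P\<close> have "X closure_of (disc X f) \<in> P"
    by (rule closed_ideal_closure_of_subset[OF closed_ideal])
  with assms(1) show ?thesis
    by (simp add: mem_carrier_CP)
qed

lemma point_indicator_mem_carrier: "point_indicator X a \<in> carrier (CP X P)"
  by (rule finite_support_mem_carrier)
    (auto simp: point_indicator_def support_on_def intro: finite_subset[of _ "{a}"])

lemma mem_ideal_if_point_indicators_mem:
  assumes J: "ideal J (CP X P)" and "finite F" "\<And>a. a \<in> F \<Longrightarrow> point_indicator X a \<in> J"
    and "f \<in> extensional (topspace X)" "support_on (topspace X) f \<subseteq> F"
  shows "f \<in> J"
  using assms(2-)
proof (induction F arbitrary: f rule: finite_induct)
  case empty
  then have "f = \<zero>\<^bsub>CP X P\<^esub>"
    by (auto simp: CP_simps fun_eq_iff extensional_def support_on_def)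
  then show ?case
    using additive_subgroup.zero_closed[OF ideal.axioms(1)[OF J]] by simp
next
  case (insert a F)
  define g where "g = restrict (\<lambda>y. if y = a then 0 else f y) (topspace X)"
  have "g \<in> J"
  proof (rule insert.IH)
    show "point_indicator X b \<in> J" if "b \<in> F" for b
      using that by (intro insert.prems(1)) simp
    show "g \<in> extensional (topspace X)"
      by (simp add: g_def)
    show "support_on (topspace X) g \<subseteq> F"
      using insert.prems(3) by (auto simp: g_def support_on_def)
  qed
  have "finite (support_on (topspace X) f)"
    using insert.hyps(1) insert.prems(3) by (simp add: finite_subset)
  then have "f \<in> carrier (CP X P)"
    using insert.prems(2) by (intro finite_support_mem_carrier)
  then have "f \<otimes>\<^bsub>CP X P\<^esub> point_indicator X a \<in> J"
    using ideal.I_l_closed[OF J insert.prems(1)] by simp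
  with \<open>g \<in> J\<close> have "f \<otimes>\<^bsub>CP X P\<^esub> point_indicator X a \<oplus>\<^bsub>CP X P\<^esub> g \<in> J"
    using additive_subgroup.a_closed[OF ideal.axioms(1)[OF J]] by simp
  moreover have "f \<otimes>\<^bsub>CP X P\<^esub> point_indicator X a \<oplus>\<^bsub>CP X P\<^esub> g = f"
    using insert.prems(2) by (auto simp: CP_simps fun_eq_iff extensional_def point_indicator_def g_def)
  ultimately show ?case by simp
qed

lemma point_indicator_mem_ideal:
  assumes "ideal I (CP X P)" "g \<in> I" "g a \<noteq> 0"
  shows "point_indicator X a \<in> I"
proof -
  define h where "h = restrict (\<lambda>y. point_indicator X a y / g a) (topspace X)"
  have "h \<in> carrier (CP X P)"
    by (rule finite_support_mem_carrier)
      (auto simp: h_def point_indicator_def support_on_def intro: finite_subset[of _ "{a}"])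
  then have "h \<otimes>\<^bsub>CP X P\<^esub> g \<in> I"
    using assms(1,2) by (simp add: ideal.I_l_closed)
  moreover have "h \<otimes>\<^bsub>CP X P\<^esub> g = point_indicator X a"
    using assms(3) by (auto simp: CP_simps fun_eq_iff h_def point_indicator_def)
  ultimately show ?thesis by simp
qed

lemma noetherian_if_finite:
  assumes "finite (topspace X)"
  shows "noetherian_ring (CP X P)"
proof (rule noetherian_ringI)
  fix I assume I: "ideal I (CP X P)"
  define S where "S = {a \<in> topspace X. \<exists>g\<in>I. g a \<noteq> 0}"
  let ?A = "point_indicator X ` S"
  have A: "?A \<subseteq> carrier (CP X P)"
    using point_indicator_mem_carrier by blast
  have "Idl\<^bsub>CP X P\<^esub> ?A \<subseteq> I"
    using I by (intro genideal_minimal) (auto simp: S_def intro: point_indicator_mem_ideal)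
  moreover have "f \<in> Idl\<^bsub>CP X P\<^esub> ?A" if "f \<in> I" for f
  proof (rule mem_ideal_if_point_indicators_mem[OF genideal_ideal[OF A]])
    show "finite S"
      using assms by (simp add: S_def)
    show "point_indicator X a \<in> Idl\<^bsub>CP X P\<^esub> ?A" if "a \<in> S" for a
      using genideal_self[OF A] that by blast
    show "f \<in> extensional (topspace X)"
      using ideal.Icarr[OF I \<open>f \<in> I\<close>] by (simp add: mem_carrier_CP)
    show "support_on (topspace X) f \<subseteq> S"
      using \<open>f \<in> I\<close> by (auto simp: S_def support_on_def)
  qed
  ultimately show "\<exists>A\<subseteq>carrier (CP X P). finite A \<and> I = Idl\<^bsub>CP X P\<^esub> A"
    using A assms by (intro exI[of _ ?A]) (auto simp: S_def)
qed

lemma finite_if_noetherian: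
  assumes "noetherian_ring (CP X P)"
  shows "finite (topspace X)"
proof (rule ccontr)
  assume infinite: "infinite (topspace X)"
  define J where "J = {f \<in> carrier (CP X P). finite (support_on (topspace X) f)}"
  have "ideal J (CP X P)"
    unfolding J_def using closed_ideal by (rule ideal_CP_support) (auto intro: finite_subset)
  then obtain A where A: "A \<subseteq> carrier (CP X P)" "finite A" "J = Idl\<^bsub>CP X P\<^esub> A"
    using noetherian_ring.finetely_gen[OF assms] by blast
  define S where "S = (\<Union>g\<in>A. support_on (topspace X) g)"
  define K where "K = {f \<in> carrier (CP X P). support_on (topspace X) f \<subseteq> S}"
  have "finite S"
    using A genideal_self[OF A(1)] by (auto simp: S_def J_def)
  have "ideal K (CP X P)"
    unfolding K_def using closed_ideal by (rule ideal_CP_support) auto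
  moreover have "A \<subseteq> K"
    using A(1) by (auto simp: K_def S_def)
  ultimately have "J \<subseteq> K"
    using A(3) by (simp add: genideal_minimal)
  obtain a where a: "a \<in> topspace X" "a \<notin> S"
    using infinite \<open>finite S\<close> by (meson finite_subset subsetI)
  then have "point_indicator X a \<in> J"
    by (simp add: J_def point_indicator_mem_carrier support_point_indicator)
  with \<open>J \<subseteq> K\<close> a show False
    by (auto simp: K_def support_point_indicator)
qed

end

theorem theorem5p11:
  fixes X :: "'a topology" and P :: "'a set set"
  assumes "t1_space X"
    and "closed_ideal X P"
    and "\<And>x. x \<in> topspace X \<Longrightarrow> {x} \<in> P"
  shows "noetherian_ring (CP X P) \<longleftrightarrow> finite (topspace X)"
proof -
  interpret closed_ideal_with_points X P
    using assms(2,3) by unfold_locales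
  show ?thesis
    using noetherian_if_finite finite_if_noetherian by blast
qed

end
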